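(* Let $\Lambda$ be a finitely aligned left cancellative small category, let $\alpha,\beta\in\Lambda$ with $s(\alpha)=s(\beta)$ and $\alpha\beta^*\in S_\Lambda^{\mathrm{Iso}}$, and write $\alpha\Lambda\cap\beta\Lambda=\bigcup_{i=1}^n\gamma_i\Lambda$ with $\gamma_i\in\Lambda$. Then $D_{\alpha\Lambda}=D_{\beta\Lambda}=\bigcup_{i=1}^nD_{\gamma_i\Lambda}$. Furthermore, if $\gamma\in\Lambda$ satisfies $\gamma\Lambda\cap\alpha\Lambda\neq\emptyset$ or $\gamma\Lambda\cap\beta\Lambda\neq\emptyset$, then there exists $1\le i\le n$ with $\gamma\Lambda\cap\gamma_i\Lambda\neq\emptyset$.
   Context: $\Lambda$ is a left cancellative small category (range $r$, source $s$), finitely aligned: each $\alpha\Lambda\cap\beta\Lambda$ is a finite union of sets $f\Lambda$, where $\alpha\Lambda=\{\alpha\beta:s(\alpha)=r(\beta)\}$. Each $\alpha$ is viewed as the partial bijection $s(\alpha)\Lambda\to\alpha\Lambda$, $\beta\mapsto\alpha\beta$, in the symmetric inverse monoid $\mathcal{I}(\Lambda)$, with inverse $\alpha^*$; $S_\Lambda$ is the inverse semigroup they generate. $S_\Lambda^{\mathrm{Iso}}=\{s\in S_\Lambda: ses^*e\neq0\text{ for all idempotents }0\neq e\leqslant s^*s\}$. The constructible sets are $\mathcal{J}(\Lambda)=\{X\subseteq\Lambda:\mathrm{Id}_X\in S_\Lambda\}$, a semilattice under intersection isomorphic to the idempotent semilattice of $S_\Lambda$ (e.g. $\alpha\Lambda\in\mathcal{J}(\Lambda)$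 since $\mathrm{Id}_{\alpha\Lambda}=\alpha\alpha^*$). Filters are nonempty proper subsets of $\mathcal{J}(\Lambda)$ (not containing $\emptyset$) closed under intersection and upward closed; tight filters are those in the closure of the maximal filters in $\{0,1\}^{\mathcal{J}(\Lambda)}$. For $X\in\mathcal{J}(\Lambda)$, $D_X=\{\xi\text{ tight filter}:X\in\xi\}$. *)

theory Defs
  imports "HOL-Analysis.Analysis"
begin

text \<open>A small category is given by its set of morphisms L, range and source maps
  r s (valued in identity morphisms, which represent the objects), and a composition
  c, where c a b (written ab in the paper) is defined when s a = r b.\<close>

definition small_category ::
  "'a set \<Rightarrow> ('a \<Rightarrow> 'a) \<Rightarrow> ('a \<Rightarrow> 'a) \<Rightarrow> ('a \<Rightarrow> 'a \<Rightarrow> 'a) \<Rightarrow> bool" where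
  "small_category L r s c \<longleftrightarrow>
     (\<forall>a\<in>L. r a \<in> L \<and> s a \<in> L \<and> r (r a) = r a \<and> s (r a) = r a
              \<and> r (s a) = s a \<and> s (s a) = s a
              \<and> c (r a) a = a \<and> c a (s a) = a) \<and>
     (\<forall>a\<in>L. \<forall>b\<in>L. s a = r b \<longrightarrow> c a b \<in> L \<and> r (c a b) = r a \<and> s (c a b) = s b) \<and>
     (\<forall>a\<in>L. \<forall>b\<in>L. \<forall>d\<in>L. s a = r b \<longrightarrow> s b = r d \<longrightarrow> c (c a b) d = c a (c b d))"

definition left_cancellative ::
  "'a set \<Rightarrow> ('a \<Rightarrow> 'a) \<Rightarrow> ('a \<Rightarrow> 'a) \<Rightarrow> ('a \<Rightarrow> 'a \<Rightarrow> 'a) \<Rightarrow> bool" where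
  "left_cancellative L r s c \<longleftrightarrow>
     (\<forall>a\<in>L. \<forall>b\<in>L. \<forall>d\<in>L. s a = r b \<longrightarrow> s a = r d \<longrightarrow> c a b = c a d \<longrightarrow> b = d)"

definition rset :: "'a set \<Rightarrow> ('a \<Rightarrow> 'a) \<Rightarrow> ('a \<Rightarrow> 'a) \<Rightarrow> ('a \<Rightarrow> 'a \<Rightarrow> 'a) \<Rightarrow> 'a \<Rightarrow> 'a set" where
  "rset L r s c a = {c a b | b. b \<in> L \<and> s a = r b}"

definition finitely_aligned ::
  "'a set \<Rightarrow> ('a \<Rightarrow> 'a) \<Rightarrow> ('a \<Rightarrow> 'a) \<Rightarrow> ('a \<Rightarrow> 'a \<Rightarrow> 'a) \<Rightarrow> bool" where
  "finitely_aligned L r s c \<longleftrightarrow>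
     (\<forall>a\<in>L. \<forall>b\<in>L. \<exists>F. finite F \<and> F \<subseteq> L \<and>
        rset L r s c a \<inter> rset L r s c b = (\<Union>g\<in>F. rset L r s c g))"

text \<open>Partial bijections of L are modelled as partial maps; composition map_comp f g
  applies g first (usual composition in the symmetric inverse monoid).\<close>

definition pmor :: "'a set \<Rightarrow> ('a \<Rightarrow> 'a) \<Rightarrow> ('a \<Rightarrow> 'a) \<Rightarrow> ('a \<Rightarrow> 'a \<Rightarrow> 'a) \<Rightarrow> 'a \<Rightarrow> ('a \<rightharpoonup> 'a)" where
  "pmor L r s c a = (\<lambda>b. if b \<in> L \<and> r b = s a then Some (c a b) else None)"

definition pinv :: "('a \<rightharpoonup> 'a) \<Rightarrow> ('a \<rightharpoonup> 'a)" where
  "pinv f = (\<lambda>y. if y \<in> ran f then Some (THE x. f x = Some y) else None)"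

inductive_set S_Lambda :: "'a set \<Rightarrow> ('a \<Rightarrow> 'a) \<Rightarrow> ('a \<Rightarrow> 'a) \<Rightarrow> ('a \<Rightarrow> 'a \<Rightarrow> 'a) \<Rightarrow> ('a \<rightharpoonup> 'a) set"
  for L r s c where
  gen: "a \<in> L \<Longrightarrow> pmor L r s c a \<in> S_Lambda L r s c"
| gen_inv: "a \<in> L \<Longrightarrow> pinv (pmor L r s c a) \<in> S_Lambda L r s c"
| comp: "f \<in> S_Lambda L r s c \<Longrightarrow> g \<in> S_Lambda L r s c \<Longrightarrow> f \<circ>\<^sub>m g \<in> S_Lambda L r s c"

definition S_Iso :: "'a set \<Rightarrow> ('a \<Rightarrow> 'a) \<Rightarrow> ('a \<Rightarrow> 'a) \<Rightarrow> ('a \<Rightarrow> 'a \<Rightarrow> 'a) \<Rightarrow> ('a \<rightharpoonup> 'a) set" where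
  "S_Iso L r s c = {t \<in> S_Lambda L r s c.
     \<forall>e \<in> S_Lambda L r s c. e \<circ>\<^sub>m e = e \<longrightarrow> e \<noteq> Map.empty \<longrightarrow> e = (pinv t \<circ>\<^sub>m t) \<circ>\<^sub>m e \<longrightarrow>
        t \<circ>\<^sub>m e \<circ>\<^sub>m pinv t \<circ>\<^sub>m e \<noteq> Map.empty}"

definition idmap :: "'a set \<Rightarrow> ('a \<rightharpoonup> 'a)" where
  "idmap X = (\<lambda>x. if x \<in> X then Some x else None)"

definition constructible :: "'a set \<Rightarrow> ('a \<Rightarrow> 'a) \<Rightarrow> ('a \<Rightarrow> 'a) \<Rightarrow> ('a \<Rightarrow> 'a \<Rightarrow> 'a) \<Rightarrow> 'a set set" where
  "constructible L r s c = {X. X \<subseteq> L \<and> idmap X \<in> S_Lambda L r s c}"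

definition is_filter :: "'a set set \<Rightarrow> 'a set set \<Rightarrow> bool" where
  "is_filter J \<xi> \<longleftrightarrow> \<xi> \<noteq> {} \<and> \<xi> \<subseteq> J \<and> {} \<notin> \<xi> \<and>
     (\<forall>X\<in>\<xi>. \<forall>Y\<in>\<xi>. X \<inter> Y \<in> \<xi>) \<and>
     (\<forall>X\<in>\<xi>. \<forall>Y\<in>J. X \<subseteq> Y \<longrightarrow> Y \<in> \<xi>)"

definition is_max_filter :: "'a set set \<Rightarrow> 'a set set \<Rightarrow> bool" where
  "is_max_filter J \<xi> \<longleftrightarrow> is_filter J \<xi> \<and> (\<forall>\<eta>. is_filter J \<eta> \<longrightarrow> \<xi> \<subseteq> \<eta> \<longrightarrow> \<eta> = \<xi>)"

text \<open>Filters are identified with their characteristic functions in the product space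
  of bool (discrete) indexed by sets; these functions vanish outside J, so the closure
  agrees with the closure in {0,1}^J.\<close>
definition is_tight_filter :: "'a set set \<Rightarrow> 'a set set \<Rightarrow> bool" where
  "is_tight_filter J \<xi> \<longleftrightarrow> is_filter J \<xi> \<and>
     (\<lambda>X. X \<in> \<xi>) \<in> closure ((\<lambda>\<eta> X. X \<in> \<eta>) ` {\<eta>. is_max_filter J \<eta>})"

definition Dset :: "'a set \<Rightarrow> ('a \<Rightarrow> 'a) \<Rightarrow> ('a \<Rightarrow> 'a) \<Rightarrow> ('a \<Rightarrow> 'a \<Rightarrow> 'a) \<Rightarrow> 'a set \<Rightarrow> 'a set set set" where
  "Dset L r s c X = {\<xi>. is_tight_filter (constructible L r s c) \<xi> \<and> X \<in> \<xi>}"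

end

theory Submission
  imports Defs
begin

text \<open>Put \<open>t = \<alpha>\<beta>\<^sup>*\<close>, a partial bijection from \<open>\<beta>\<Lambda>\<close> onto \<open>\<alpha>\<Lambda>\<close>. Applied to the
  idempotent \<open>Id\<^sub>Y\<close>, the condition \<open>t \<in> S\<^sub>\<Lambda>\<^sup>I\<^sup>s\<^sup>o\<close> says that \<open>t\<close> maps some point of
  every nonempty constructible \<open>Y \<subseteq> \<beta>\<Lambda>\<close> back into \<open>Y\<close>; applied to the preimage
  \<open>t\<^sup>-\<^sup>1(Y)\<close> it shows that every nonempty constructible \<open>Y \<subseteq> \<alpha>\<Lambda>\<close> meets \<open>\<beta>\<Lambda>\<close>.
  Hence every nonempty constructible subset of \<open>\<alpha>\<Lambda>\<close> or of \<open>\<beta>\<Lambda>\<close> meets some \<open>\<gamma>\<^sub>i\<Lambda>\<close>.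
  A tight filter containing \<open>X\<close> contains a member of every such finite cover of \<open>X\<close>:
  otherwise some nearby maximal filter contains \<open>X\<close> but no member of the cover, and
  since a maximal filter missing \<open>Z\<close> contains a set disjoint from \<open>Z\<close>, it contains
  a nonempty constructible subset of \<open>X\<close> disjoint from the whole cover.\<close>

lemma max_filter_disjoint:
  assumes max: "is_max_filter J \<eta>" and Z: "Z \<in> J" "Z \<notin> \<eta>"
    and J_Int: "\<forall>X\<in>J. \<forall>Y\<in>J. X \<inter> Y \<in> J"
  shows "\<exists>Y\<in>\<eta>. Y \<inter> Z = {}"
proof (rule ccontr)
  assume meets: "\<not> ?thesis"
  have filter: "is_filter J \<eta>" using max by (simp add: is_max_filter_def)
  define \<eta>' where "\<eta>' = {W\<in>J. \<exists>Y\<in>\<eta>. Y \<inter> Z \<subseteq> W}"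
  have "is_filter J \<eta>'"
    unfolding is_filter_def
  proof (intro conjI ballI impI)
    obtain Y where "Y \<in> \<eta>" using filter unfolding is_filter_def by auto
    then show "\<eta>' \<noteq> {}" using Z unfolding \<eta>'_def by blast
    show "\<eta>' \<subseteq> J" unfolding \<eta>'_def by blast
    show "{} \<notin> \<eta>'" using meets unfolding \<eta>'_def by blast
  next
    fix X Y assume "X \<in> \<eta>'" "Y \<in> \<eta>'"
    then obtain X1 Y1 where "X1 \<in> \<eta>" "Y1 \<in> \<eta>" "X1 \<inter> Z \<subseteq> X" "Y1 \<inter> Z \<subseteq> Y" "X \<in> J" "Y \<in> J"
      unfolding \<eta>'_def by blast
    moreover have "X1 \<inter> Y1 \<in> \<eta>" using filter calculation unfolding is_filter_def by blast
    ultimately show "X \<inter> Y \<in> \<eta>'" unfolding \<eta>'_def using J_Int by blast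
  next
    fix X Y assume "X \<in> \<eta>'" "Y \<in> J" "X \<subseteq> Y"
    then show "Y \<in> \<eta>'" unfolding \<eta>'_def by blast
  qed
  moreover have "\<eta> \<subseteq> \<eta>'" using filter unfolding \<eta>'_def is_filter_def by auto
  ultimately have "\<eta>' = \<eta>" using max unfolding is_max_filter_def by blast
  moreover have "Z \<in> \<eta>'" using Z filter unfolding \<eta>'_def is_filter_def by blast
  ultimately show False using Z by simp
qed

lemma max_filter_disjoint_finite:
  assumes max: "is_max_filter J \<eta>" and J_Int: "\<forall>X\<in>J. \<forall>Y\<in>J. X \<inter> Y \<in> J"
    and X: "X \<in> \<eta>" and Zs: "finite Zs" "Zs \<subseteq> J" "\<forall>Z\<in>Zs. Z \<notin> \<eta>"
  shows "\<exists>Y\<in>\<eta>. Y \<subseteq> X \<and> (\<forall>Z\<in>Zs. Y \<inter> Z = {})"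
  using Zs
proof (induction Zs rule: finite_induct)
  case empty
  show ?case using X by blast
next
  case (insert Z Zs)
  then obtain Y0 where Y0: "Y0 \<in> \<eta>" "Y0 \<subseteq> X" "\<forall>Z\<in>Zs. Y0 \<inter> Z = {}" by auto
  obtain Y1 where Y1: "Y1 \<in> \<eta>" "Y1 \<inter> Z = {}"
    using max_filter_disjoint[OF max _ _ J_Int] insert.prems by blast
  have "Y0 \<inter> Y1 \<in> \<eta>"
    using max Y0(1) Y1(1) unfolding is_max_filter_def is_filter_def by blast
  with Y0 Y1 show ?case by (intro bexI[of _ "Y0 \<inter> Y1"]) auto
qed

lemma tight_filter_meets_cover:
  assumes tight: "is_tight_filter J \<xi>" and J_Int: "\<forall>X\<in>J. \<forall>Y\<in>J. X \<inter> Y \<in> J"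
    and X: "X \<in> \<xi>" and Zs: "finite Zs" "Zs \<subseteq> J"
    and cover: "\<forall>Y\<in>J. Y \<subseteq> X \<longrightarrow> Y \<noteq> {} \<longrightarrow> (\<exists>Z\<in>Zs. Y \<inter> Z \<noteq> {})"
  shows "\<exists>Z\<in>Zs. Z \<in> \<xi>"
proof (rule ccontr)
  assume avoids: "\<not> ?thesis"
  have "X \<notin> Zs" using avoids X by blast
  define U where "U = {f::'a set \<Rightarrow> bool. \<forall>i\<in>insert X Zs. f (id i) \<in> {i = X}}"
  have "open U"
    unfolding U_def by (rule product_topology_basis') (use Zs in \<open>auto simp: open_discrete\<close>)
  moreover have "(\<lambda>Y. Y \<in> \<xi>) \<in> U"
    unfolding U_def using X avoids \<open>X \<notin> Zs\<close> by (auto simp del: insert_iff)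
  moreover have "(\<lambda>Y. Y \<in> \<xi>) \<in> closure ((\<lambda>\<eta> Y. Y \<in> \<eta>) ` {\<eta>. is_max_filter J \<eta>})"
    using tight unfolding is_tight_filter_def by simp
  ultimately have "(\<lambda>\<eta> Y. Y \<in> \<eta>) ` {\<eta>. is_max_filter J \<eta>} \<inter> U \<noteq> {}"
    unfolding closure_iff_nhds_not_empty by blast
  then obtain \<eta> where max: "is_max_filter J \<eta>" and "(\<lambda>Y. Y \<in> \<eta>) \<in> U" by blast
  with \<open>X \<notin> Zs\<close> have "X \<in> \<eta>" "\<forall>Z\<in>Zs. Z \<notin> \<eta>" unfolding U_def by auto
  then obtain Y where Y: "Y \<in> \<eta>" "Y \<subseteq> X" "\<forall>Z\<in>Zs. Y \<inter> Z = {}"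
    using max_filter_disjoint_finite[OF max J_Int _ Zs] by blast
  moreover have "Y \<in> J" "Y \<noteq> {}"
    using max Y(1) unfolding is_max_filter_def is_filter_def by auto
  ultimately show False using cover by blast
qed

lemma idmap_Some: "idmap X y = Some v \<longleftrightarrow> y \<in> X \<and> v = y"
  unfolding idmap_def by auto

lemma map_eqI: "(\<And>x y. f x = Some y \<longleftrightarrow> g x = Some y) \<Longrightarrow> f = g"
  by (rule ext) (metis not_None_eq)

lemma idmap_Int: "idmap (X \<inter> Y) = idmap X \<circ>\<^sub>m idmap Y"
  by (rule map_eqI) (auto simp: map_comp_Some_iff idmap_Some)

lemma constructible_Int:
  "X \<in> constructible L r s c \<Longrightarrow> Y \<in> constructible L r s c \<Longrightarrow> X \<inter> Y \<in> constructible L r s c"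
  unfolding constructible_def by (auto simp: idmap_Int intro: S_Lambda.comp)

lemma Dset_eq_UN_cover:
  assumes X: "X \<in> constructible L r s c" and I: "finite I"
    and Z: "\<And>i. i \<in> I \<Longrightarrow> Z i \<in> constructible L r s c" "\<And>i. i \<in> I \<Longrightarrow> Z i \<subseteq> X"
    and cover: "\<And>Y. Y \<in> constructible L r s c \<Longrightarrow> Y \<noteq> {} \<Longrightarrow> Y \<subseteq> X \<Longrightarrow> \<exists>i\<in>I. Y \<inter> Z i \<noteq> {}"
  shows "Dset L r s c X = (\<Union>i\<in>I. Dset L r s c (Z i))"
proof
  show "Dset L r s c X \<subseteq> (\<Union>i\<in>I. Dset L r s c (Z i))"
  proof
    fix \<xi> assume "\<xi> \<in> Dset L r s c X"
    then have tight: "is_tight_filter (constructible L r s c) \<xi>" and "X \<in> \<xi>"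
      unfolding Dset_def by simp_all
    have "\<exists>W\<in>Z ` I. W \<in> \<xi>"
    proof (rule tight_filter_meets_cover[OF tight _ \<open>X \<in> \<xi>\<close>])
      show "\<forall>X\<in>constructible L r s c. \<forall>Y\<in>constructible L r s c. X \<inter> Y \<in> constructible L r s c"
        by (blast intro: constructible_Int)
      show "finite (Z ` I)" using I by simp
      show "Z ` I \<subseteq> constructible L r s c" using Z(1) by blast
      show "\<forall>Y\<in>constructible L r s c. Y \<subseteq> X \<longrightarrow> Y \<noteq> {} \<longrightarrow> (\<exists>W\<in>Z ` I. Y \<inter> W \<noteq> {})"
        using cover by blast
    qed
    with tight show "\<xi> \<in> (\<Union>i\<in>I. Dset L r s c (Z i))" unfolding Dset_def by blast
  qed
next
  show "(\<Union>i\<in>I. Dset L r s c (Z i)) \<subseteq> Dset L r s c X"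
  proof
    fix \<xi> assume "\<xi> \<in> (\<Union>i\<in>I. Dset L r s c (Z i))"
    then obtain i where "i \<in> I" "is_tight_filter (constructible L r s c) \<xi>" "Z i \<in> \<xi>"
      unfolding Dset_def by blast
    moreover from this have "\<forall>V\<in>\<xi>. \<forall>W\<in>constructible L r s c. V \<subseteq> W \<longrightarrow> W \<in> \<xi>"
      unfolding is_tight_filter_def is_filter_def by blast
    ultimately show "\<xi> \<in> Dset L r s c X" using X Z(2) unfolding Dset_def by blast
  qed
qed

definition pinj :: "('a \<rightharpoonup> 'b) \<Rightarrow> bool" where
  "pinj f \<longleftrightarrow> (\<forall>x x' y. f x = Some y \<longrightarrow> f x' = Some y \<longrightarrow> x = x')"

lemma pinv_Some:
  assumes "pinj f"
  shows "pinv f y = Some x \<longleftrightarrow> f x = Some y"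
proof -
  have "(THE x. f x = Some y) = x0" if "f x0 = Some y" for x0
    using assms that unfolding pinj_def by (intro the_equality) blast+
  then show ?thesis unfolding pinv_def ran_def by auto
qed

lemma pinj_map_comp: "pinj f \<Longrightarrow> pinj g \<Longrightarrow> pinj (f \<circ>\<^sub>m g)"
  unfolding pinj_def map_comp_Some_iff by metis

lemma pinj_pinv:
  assumes "pinj f"
  shows "pinj (pinv f)"
  unfolding pinj_def by (simp add: pinv_Some[OF assms])

lemma pinv_pinv: "pinj f \<Longrightarrow> pinv (pinv f) = f"
  by (rule map_eqI) (simp add: pinv_Some pinj_pinv)

lemma pinv_map_comp: "pinj f \<Longrightarrow> pinj g \<Longrightarrow> pinv (f \<circ>\<^sub>m g) = pinv g \<circ>\<^sub>m pinv f"
  by (rule map_eqI) (auto simp: pinv_Some pinj_map_comp map_comp_Some_iff)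

lemma pmor_Some: "pmor L r s c a b = Some v \<longleftrightarrow> b \<in> L \<and> r b = s a \<and> v = c a b"
  unfolding pmor_def by auto

lemma pinj_pmor: "left_cancellative L r s c \<Longrightarrow> a \<in> L \<Longrightarrow> pinj (pmor L r s c a)"
  unfolding pinj_def pmor_Some left_cancellative_def by metis

lemma pinj_S_Lambda:
  assumes "left_cancellative L r s c"
  shows "f \<in> S_Lambda L r s c \<Longrightarrow> pinj f"
  by (induction rule: S_Lambda.induct) (auto intro: assms pinj_pmor pinj_pinv pinj_map_comp)

lemma pinv_S_Lambda:
  assumes lc: "left_cancellative L r s c"
  shows "f \<in> S_Lambda L r s c \<Longrightarrow> pinv f \<in> S_Lambda L r s c"
proof (induction rule: S_Lambda.induct)
  case (gen_inv a)
  then show ?case by (simp add: pinv_pinv pinj_pmor[OF lc] S_Lambda.gen)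
next
  case (comp f g)
  then show ?case by (simp add: pinv_map_comp pinj_S_Lambda[OF lc] S_Lambda.comp)
qed (rule S_Lambda.gen_inv)

lemma rset_mem: "y \<in> rset L r s c a \<longleftrightarrow> (\<exists>b. b \<in> L \<and> s a = r b \<and> y = c a b)"
  unfolding rset_def by auto

lemma rset_subset: "small_category L r s c \<Longrightarrow> a \<in> L \<Longrightarrow> rset L r s c a \<subseteq> L"
  unfolding rset_def small_category_def by auto

lemma dom_pinv: "dom (pinv f) = ran f"
  unfolding pinv_def dom_def by simp

lemma dom_S_Lambda:
  assumes "small_category L r s c"
  shows "f \<in> S_Lambda L r s c \<Longrightarrow> dom f \<subseteq> L"
proof (induction rule: S_Lambda.induct)
  case (gen_inv a)
  have "ran (pmor L r s c a) \<subseteq> rset L r s c a"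
    by (force simp: ran_def pmor_Some rset_def)
  with gen_inv show ?case using rset_subset[OF assms] by (metis dom_pinv order_trans)
qed (auto simp: pmor_def dom_def map_comp_def split: option.splits)

lemma idmap_preimage:
  "pinj t \<Longrightarrow> idmap {z. \<exists>w\<in>Y. t z = Some w} = pinv t \<circ>\<^sub>m idmap Y \<circ>\<^sub>m t"
  by (rule map_eqI) (auto simp: map_comp_Some_iff idmap_Some pinv_Some pinj_def)

lemma constructible_preimage:
  assumes cat: "small_category L r s c" and lc: "left_cancellative L r s c"
    and t: "t \<in> S_Lambda L r s c" and Y: "Y \<in> constructible L r s c"
  shows "{z. \<exists>w\<in>Y. t z = Some w} \<in> constructible L r s c"
proof -
  have "{z. \<exists>w\<in>Y. t z = Some w} \<subseteq> dom t" by blast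
  moreover have "idmap {z. \<exists>w\<in>Y. t z = Some w} \<in> S_Lambda L r s c"
    using Y t unfolding idmap_preimage[OF pinj_S_Lambda[OF lc t]] constructible_def
    by (blast intro: S_Lambda.comp pinv_S_Lambda[OF lc])
  ultimately show ?thesis
    using dom_S_Lambda[OF cat t] unfolding constructible_def by blast
qed

lemma idmap_rset:
  "left_cancellative L r s c \<Longrightarrow> a \<in> L \<Longrightarrow>
    idmap (rset L r s c a) = pmor L r s c a \<circ>\<^sub>m pinv (pmor L r s c a)"
  by (rule map_eqI)
    (auto simp: map_comp_Some_iff pinv_Some pinj_pmor idmap_Some rset_mem pmor_Some)

lemma rset_constructible:
  "small_category L r s c \<Longrightarrow> left_cancellative L r s c \<Longrightarrow> a \<in> L \<Longrightarrow>
    rset L r s c a \<in> constructible L r s c"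
  unfolding constructible_def by (auto simp: idmap_rset rset_subset intro!: S_Lambda.intros)

lemma S_Iso_maps_into:
  assumes t: "t \<in> S_Iso L r s c" and lc: "left_cancellative L r s c"
    and Y: "Y \<in> constructible L r s c" "Y \<noteq> {}" "Y \<subseteq> dom t"
  shows "\<exists>z\<in>Y. \<exists>w\<in>Y. t z = Some w"
proof -
  have "pinj t" using t lc pinj_S_Lambda unfolding S_Iso_def by blast
  have "idmap Y \<circ>\<^sub>m idmap Y = idmap Y" by (simp flip: idmap_Int)
  moreover have "idmap Y \<noteq> Map.empty" using Y(2) unfolding idmap_def by (metis ex_in_conv option.discI)
  moreover have "idmap Y = (pinv t \<circ>\<^sub>m t) \<circ>\<^sub>m idmap Y"
    using Y(3) \<open>pinj t\<close> by (intro map_eqI) (auto simp: map_comp_Some_iff idmap_Some pinv_Some pinj_def)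
  ultimately have "t \<circ>\<^sub>m idmap Y \<circ>\<^sub>m pinv t \<circ>\<^sub>m idmap Y \<noteq> Map.empty"
    using t Y(1) unfolding S_Iso_def constructible_def by blast
  then obtain k v where "(t \<circ>\<^sub>m idmap Y \<circ>\<^sub>m pinv t \<circ>\<^sub>m idmap Y) k = Some v"
    by (metis not_Some_eq)
  then show ?thesis using \<open>pinj t\<close> by (auto simp: map_comp_Some_iff idmap_Some pinv_Some)
qed

lemma S_Iso_dom_subset_meets_ran:
  assumes "t \<in> S_Iso L r s c" "left_cancellative L r s c"
    and "Y \<in> constructible L r s c" "Y \<noteq> {}" "Y \<subseteq> dom t"
  shows "Y \<inter> ran t \<noteq> {}"
  using S_Iso_maps_into[OF assms] by (auto simp: ran_def)

lemma S_Iso_ran_subset_meets_dom: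
  assumes t: "t \<in> S_Iso L r s c" and cat: "small_category L r s c" and lc: "left_cancellative L r s c"
    and Y: "Y \<in> constructible L r s c" "Y \<noteq> {}" "Y \<subseteq> ran t"
  shows "Y \<inter> dom t \<noteq> {}"
proof -
  define Y' where "Y' = {z. \<exists>w\<in>Y. t z = Some w}"
  have "Y' \<in> constructible L r s c"
    unfolding Y'_def using t by (intro constructible_preimage[OF cat lc _ Y(1)]) (simp add: S_Iso_def)
  moreover have "Y' \<noteq> {}" using Y(2,3) unfolding Y'_def ran_def by blast
  moreover have "Y' \<subseteq> dom t" unfolding Y'_def by blast
  ultimately obtain z w where "z \<in> Y'" "w \<in> Y'" "t z = Some w"
    using S_Iso_maps_into[OF t lc] by blast
  then have "w \<in> Y \<inter> dom t" unfolding Y'_def by auto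
  then show ?thesis by blast
qed

lemma pmor_pinv_pmor_Some:
  assumes "left_cancellative L r s c" "\<beta> \<in> L" "s \<alpha> = s \<beta>"
  shows "(pmor L r s c \<alpha> \<circ>\<^sub>m pinv (pmor L r s c \<beta>)) z = Some w \<longleftrightarrow>
    (\<exists>x. x \<in> L \<and> s \<beta> = r x \<and> z = c \<beta> x \<and> w = c \<alpha> x)"
  using assms by (auto simp: map_comp_Some_iff pinv_Some pinj_pmor pmor_Some)

lemma dom_pmor_pinv_pmor:
  "left_cancellative L r s c \<Longrightarrow> \<beta> \<in> L \<Longrightarrow> s \<alpha> = s \<beta> \<Longrightarrow>
    dom (pmor L r s c \<alpha> \<circ>\<^sub>m pinv (pmor L r s c \<beta>)) = rset L r s c \<beta>"
  unfolding dom_def by (auto simp: pmor_pinv_pmor_Some rset_mem)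

lemma ran_pmor_pinv_pmor:
  "left_cancellative L r s c \<Longrightarrow> \<beta> \<in> L \<Longrightarrow> s \<alpha> = s \<beta> \<Longrightarrow>
    ran (pmor L r s c \<alpha> \<circ>\<^sub>m pinv (pmor L r s c \<beta>)) = rset L r s c \<alpha>"
  unfolding ran_def by (auto simp: pmor_pinv_pmor_Some rset_mem)

theorem lemma4p4:
  fixes L :: "'a set" and r s :: "'a \<Rightarrow> 'a" and c :: "'a \<Rightarrow> 'a \<Rightarrow> 'a"
    and \<alpha> \<beta> :: 'a and n :: nat and \<gamma>s :: "nat \<Rightarrow> 'a"
  assumes cat: "small_category L r s c"
    and lc: "left_cancellative L r s c"
    and fa: "finitely_aligned L r s c"
    and \<alpha>: "\<alpha> \<in> L" and \<beta>: "\<beta> \<in> L" and src: "s \<alpha> = s \<beta>"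
    and iso: "pmor L r s c \<alpha> \<circ>\<^sub>m pinv (pmor L r s c \<beta>) \<in> S_Iso L r s c"
    and \<gamma>s: "\<forall>i\<in>{1..n}. \<gamma>s i \<in> L"
    and inter: "rset L r s c \<alpha> \<inter> rset L r s c \<beta> = (\<Union>i\<in>{1..n}. rset L r s c (\<gamma>s i))"
  shows "Dset L r s c (rset L r s c \<alpha>) = Dset L r s c (rset L r s c \<beta>)
       \<and> Dset L r s c (rset L r s c \<alpha>) = (\<Union>i\<in>{1..n}. Dset L r s c (rset L r s c (\<gamma>s i)))
       \<and> (\<forall>\<gamma>\<in>L. (rset L r s c \<gamma> \<inter> rset L r s c \<alpha> \<noteq> {} \<or> rset L r s c \<gamma> \<inter> rset L r s c \<beta> \<noteq> {})
              \<longrightarrow> (\<exists>i\<in>{1..n}. rset L r s c \<gamma> \<inter> rset L r s c (\<gamma>s i) \<noteq> {}))"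
proof -
  let ?R = "rset L r s c" and ?J = "constructible L r s c"
  have R_J: "a \<in> L \<Longrightarrow> ?R a \<in> ?J" for a by (rule rset_constructible[OF cat lc])
  have meets: "\<exists>i\<in>{1..n}. Y \<inter> ?R (\<gamma>s i) \<noteq> {}"
    if "Y \<in> ?J" "Y \<noteq> {}" "Y \<subseteq> ?R \<alpha> \<or> Y \<subseteq> ?R \<beta>" for Y
  proof -
    have "Y \<inter> ?R \<alpha> \<inter> ?R \<beta> \<noteq> {}"
      using that S_Iso_dom_subset_meets_ran[OF iso lc] S_Iso_ran_subset_meets_dom[OF iso cat lc]
      unfolding dom_pmor_pinv_pmor[OF lc \<beta> src] ran_pmor_pinv_pmor[OF lc \<beta> src] by blast
    then show ?thesis using inter by blast
  qed
  have "Dset L r s c (?R a) = (\<Union>i\<in>{1..n}. Dset L r s c (?R (\<gamma>s i)))" if "a \<in> {\<alpha>, \<beta>}" for a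
    using that \<alpha> \<beta> \<gamma>s inter meets
    by (intro Dset_eq_UN_cover) (auto intro: R_J)
  moreover have "\<exists>i\<in>{1..n}. ?R \<gamma> \<inter> ?R (\<gamma>s i) \<noteq> {}"
    if "\<gamma> \<in> L" "?R \<gamma> \<inter> ?R \<alpha> \<noteq> {} \<or> ?R \<gamma> \<inter> ?R \<beta> \<noteq> {}" for \<gamma>
    using that meets[of "?R \<gamma> \<inter> ?R \<alpha>"] meets[of "?R \<gamma> \<inter> ?R \<beta>"] \<alpha> \<beta>
    by (auto intro: constructible_Int R_J)
  ultimately show ?thesis by simp
qed

end
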